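(* Let $N\ge3$ and let $d$ be a positive divisor of $N$. Then $p^d_*\circ\mathcal F=\mathcal F_d\circ\tilde p^d_*$ and $i^*_d\circ\mathcal F=\mathcal F_d\circ\tilde i^*_d$ as maps $\mathbb{Q}(\mu_N)\langle\langle\widetilde X\rangle\rangle\to\mathbb{Q}(\mu_N)\langle\langle X_d\rangle\rangle$ (all four maps $p^d_*,\tilde p^d_*,i^*_d,\tilde i^*_d$ extended $\mathbb{Q}(\mu_N)$-linearly).
   Context: $\zeta_N=\exp(2\pi i/N)$, $\mu_N$ the complex $N$-th roots of unity, $\iota:\{1,\dots,N\}\to\mathbb{Z}/N\mathbb{Z}$ and $\iota_d:\{1,\dots,N/d\}\to\mathbb{Z}/\frac Nd\mathbb{Z}$ the residue-class bijections, and $\nu_d:\mathbb{Z}/\frac Nd\mathbb{Z}\to d\mathbb{Z}/N\mathbb{Z}$ the group isomorphism with $\nu_d(\iota_d(m))=\iota(dm)$. $K\langle\langle\mathcal L\rangle\rangle$: noncommutative formal power series over $\mathcal L$. Alphabets $X=\{x_0\}\cup\{x_\zeta:\zeta\in\mu_N\}$, $X_d=\{x_0\}\cup\{x_\zeta:\zeta\in\mu_{N/d}\}\subset X$, $\widetilde X=\{\tilde x\}\cup\{\tilde x_\alpha:\alpha\in\mathbb{Z}/N\mathbb{Z}\}$, $\widetilde X_d=\{\tilde x\}\cup\{\tilde x_\beta:\beta\in\mathbb{Z}/\frac Nd\mathbb{Z}\}$. $\mathcal F:\mathbb{Q}(\mu_N)\langle\langle\widetilde X\rangle\rangle\to\mathbb{Q}(\mu_N)\langle\langle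 X\rangle\rangle$ is the continuous algebra morphism $\tilde x\mapsto x_0$, $\tilde x_\alpha\mapsto\sum_{m=1}^N\zeta_N^{-m\iota^{-1}(\alpha)}x_{\zeta_N^m}$; $\mathcal F_d:\mathbb{Q}(\mu_N)\langle\langle\widetilde X_d\rangle\rangle\to\mathbb{Q}(\mu_N)\langle\langle X_d\rangle\rangle$ is the continuous algebra morphism $\tilde x\mapsto x_0$, $\tilde x_\beta\mapsto\sum_{m=1}^{N/d}\zeta_N^{-md\,\iota_d^{-1}(\beta)}x_{\zeta_N^{dm}}$. Algebra morphisms $\mathbb{Q}\langle\langle X\rangle\rangle\to\mathbb{Q}\langle\langle X_d\rangle\rangle$: $p^d_*$: $x_0\mapsto d\,x_0$, $x_\zeta\mapsto x_{\zeta^d}$; $i^*_d$: $x_0\mapsto x_0$, $x_\zeta\mapsto x_\zeta$ if $\zeta\in\mu_{N/d}$ and $x_\zeta\mapsto0$ otherwise. Algebra morphisms $\mathbb{Q}\langle\langle\widetilde X\rangle\rangle\to\mathbb{Q}\langle\langle\widetilde X_d\rangle\rangle$: $\tilde p^d_*$: $\tilde x\mapsto d\,\tilde x$, $\tilde x_\alpha\mapsto d\,\tilde x_{\nu_d^{-1}(\alpha)}$ if $\alpha\in d\mathbb{Z}/N\mathbb{Z}$ and $\tilde x_\alpha\mapsto0$ otherwise; $\tilde i^*_d$: $\tilde x\mapsto\tilde x$, $\tilde x_\alpha\mapsto\tilde x_{\nu_d^{-1}(d\alpha)}$. *)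

theory Defs
  imports Complex_Main
begin

definition zeta :: "nat \<Rightarrow> complex" where
  "zeta N = cis (2 * pi / real N)"

definition mu :: "nat \<Rightarrow> complex set" where
  "mu N = {z. z ^ N = 1}"

text \<open>Letters. x_0 is X0, x_zeta is XZ zeta. The residue class alpha in Z/NZ is
  represented by its representative in {0..<N}; tilde-x is TX, tilde-x_alpha is TXa alpha.\<close>
datatype xletter = X0 | XZ complex
datatype txletter = TX | TXa nat

definition alphX :: "nat \<Rightarrow> xletter set" where
  "alphX N = insert X0 (XZ ` mu N)"
definition alphXd :: "nat \<Rightarrow> nat \<Rightarrow> xletter set" where
  "alphXd N d = insert X0 (XZ ` mu (N div d))"
definition alphTX :: "nat \<Rightarrow> txletter set" where
  "alphTX N = insert TX (TXa ` {..<N})"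
definition alphTXd :: "nat \<Rightarrow> nat \<Rightarrow> txletter set" where
  "alphTXd N d = insert TX (TXa ` {..<N div d})"

definition iota_inv :: "nat \<Rightarrow> nat \<Rightarrow> nat" where
  "iota_inv M a = (if a mod M = 0 then M else a mod M)"

text \<open>nu_d : Z/(N/d)Z -> dZ/NZ, beta |-> d*beta; its inverse alpha |-> alpha div d.\<close>
definition nu :: "nat \<Rightarrow> nat \<Rightarrow> nat \<Rightarrow> nat" where
  "nu N d b = (d * b) mod N"
definition nu_inv :: "nat \<Rightarrow> nat \<Rightarrow> nat" where
  "nu_inv d a = a div d"

text \<open>Noncommutative formal power series over an alphabet: coefficient functions on words.
  A continuous algebra morphism sending each letter a to a linear combination of letters
  (coefficient of letter b in the image of a is img a b) acts on a series S by the formula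
  below (expansion of sum_u S(u) phi(u_1)...phi(u_n)).\<close>
definition lsubst :: "'a set \<Rightarrow> ('a \<Rightarrow> 'b \<Rightarrow> complex) \<Rightarrow> ('a list \<Rightarrow> complex) \<Rightarrow> 'b list \<Rightarrow> complex" where
  "lsubst A img S w =
     (\<Sum>u \<in> {u. set u \<subseteq> A \<and> length u = length w}.
        S u * (\<Prod>i<length w. img (u ! i) (w ! i)))"

definition ind :: "'b \<Rightarrow> 'b \<Rightarrow> complex" where
  "ind b b' = (if b' = b then 1 else 0)"

definition F_img :: "nat \<Rightarrow> txletter \<Rightarrow> xletter \<Rightarrow> complex" where
  "F_img N a = (case a of
      TX \<Rightarrow> ind X0
    | TXa al \<Rightarrow> (\<lambda>b. \<Sum>m=1..N. zeta N powi (- (int m * int (iota_inv N al))) * ind (XZ (zeta N ^ m)) b))"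

definition Fd_img :: "nat \<Rightarrow> nat \<Rightarrow> txletter \<Rightarrow> xletter \<Rightarrow> complex" where
  "Fd_img N d a = (case a of
      TX \<Rightarrow> ind X0
    | TXa be \<Rightarrow> (\<lambda>b. \<Sum>m=1..N div d.
          zeta N powi (- (int m * int d * int (iota_inv (N div d) be))) * ind (XZ (zeta N ^ (d * m))) b))"

definition pd_img :: "nat \<Rightarrow> xletter \<Rightarrow> xletter \<Rightarrow> complex" where
  "pd_img d a = (case a of
      X0 \<Rightarrow> (\<lambda>b. of_nat d * ind X0 b)
    | XZ z \<Rightarrow> ind (XZ (z ^ d)))"

definition id_img :: "nat \<Rightarrow> nat \<Rightarrow> xletter \<Rightarrow> xletter \<Rightarrow> complex" where
  "id_img N d a = (case a of
      X0 \<Rightarrow> ind X0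
    | XZ z \<Rightarrow> (if z \<in> mu (N div d) then ind (XZ z) else (\<lambda>b. 0)))"

definition tpd_img :: "nat \<Rightarrow> nat \<Rightarrow> txletter \<Rightarrow> txletter \<Rightarrow> complex" where
  "tpd_img N d a = (case a of
      TX \<Rightarrow> (\<lambda>b. of_nat d * ind TX b)
    | TXa al \<Rightarrow> (if d dvd al then (\<lambda>b. of_nat d * ind (TXa (nu_inv d al)) b) else (\<lambda>b. 0)))"

definition tid_img :: "nat \<Rightarrow> nat \<Rightarrow> txletter \<Rightarrow> txletter \<Rightarrow> complex" where
  "tid_img N d a = (case a of
      TX \<Rightarrow> ind TX
    | TXa al \<Rightarrow> ind (TXa (nu_inv d ((d * al) mod N))))"

end

theory Submission
  imports Defs "HOL-Library.Real_Mod"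
begin

text \<open>All four maps substitute each letter by a linear combination of letters, and composing two
  such substitutions substitutes each letter by the composite of the letter images, so both identities
  only need to be checked on single letters. On x~_alpha, p^d_* o F gives the sum over m of
  zeta^(-m alpha) x_(zeta^(m d)); grouping m by its residue modulo N/d produces the factor
  sum_(j<d) omega^j with omega = zeta^(-alpha N/d) a d-th root of unity, which is d if d divides alpha
  and 0 otherwise, exactly as for F_d o p~^d_*. For i^*_d o F only the terms with d dividing m survive,
  and they form F_d(x~_(alpha mod N/d)).\<close>

lemma sum_lists_length_prod:
  fixes h :: "nat \<Rightarrow> 'a \<Rightarrow> 'b :: comm_semiring_1"
  assumes "finite B"
  shows "(\<Sum>v\<in>{v. set v \<subseteq> B \<and> length v = n}. \<Prod>i<n. h i (v ! i)) = (\<Prod>i<n. \<Sum>b\<in>B. h i b)"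
proof (induction n arbitrary: h)
  case 0
  have "{v. set v \<subseteq> B \<and> length v = 0} = {[]}"
    by auto
  then show ?case by simp
next
  case (Suc n)
  let ?W = "{v. set v \<subseteq> B \<and> length v = n}"
  have inj: "inj_on (\<lambda>(v, b). b # v) (?W \<times> B)"
    by (auto simp: inj_on_def)
  have "(\<Sum>v\<in>{v. set v \<subseteq> B \<and> length v = Suc n}. \<Prod>i<Suc n. h i (v ! i))
      = (\<Sum>(v, b)\<in>?W \<times> B. h 0 b * (\<Prod>i<n. h (Suc i) (v ! i)))"
    unfolding lists_length_Suc_eq sum.reindex[OF inj] prod.lessThan_Suc_shift by (simp add: case_prod_beta)
  also have "\<dots> = (\<Sum>b\<in>B. h 0 b) * (\<Sum>v\<in>?W. \<Prod>i<n. h (Suc i) (v ! i))"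
    by (simp add: sum_product sum.cartesian_product[symmetric]) (rule sum.swap)
  also have "\<dots> = (\<Prod>i<Suc n. \<Sum>b\<in>B. h i b)"
    by (simp only: Suc.IH[of "\<lambda>i. h (Suc i)"] prod.lessThan_Suc_shift)
  finally show ?case .
qed

definition comp_img :: "'b set \<Rightarrow> ('a \<Rightarrow> 'b \<Rightarrow> complex) \<Rightarrow> ('b \<Rightarrow> 'c \<Rightarrow> complex) \<Rightarrow> 'a \<Rightarrow> 'c \<Rightarrow> complex"
  where "comp_img B f g a c = (\<Sum>v\<in>B. f a v * g v c)"

lemma lsubst_lsubst:
  fixes g :: "'b \<Rightarrow> 'c \<Rightarrow> complex"
  assumes "finite A" "finite B"
  shows "lsubst B g (lsubst A f S) = lsubst A (comp_img B f g) S"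
proof
  fix w :: "'c list"
  let ?W = "\<lambda>C. {v. set v \<subseteq> C \<and> length v = length w}"
  have "lsubst B g (lsubst A f S) w
     = (\<Sum>v\<in>?W B. \<Sum>u\<in>?W A. S u * (\<Prod>i<length w. f (u ! i) (v ! i)) * (\<Prod>i<length w. g (v ! i) (w ! i)))"
    unfolding lsubst_def by (intro sum.cong refl) (simp add: sum_distrib_right)
  also have "\<dots> = (\<Sum>u\<in>?W A. S u * (\<Sum>v\<in>?W B. \<Prod>i<length w. f (u ! i) (v ! i) * g (v ! i) (w ! i)))"
    by (subst sum.swap) (simp add: sum_distrib_left prod.distrib mult.assoc)
  also have "\<dots> = lsubst A (comp_img B f g) S w"
  proof -
    have "(\<Sum>v\<in>?W B. \<Prod>i<length w. f (u ! i) (v ! i) * g (v ! i) (w ! i))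
        = (\<Prod>i<length w. \<Sum>b\<in>B. f (u ! i) b * g b (w ! i))" for u
      by (rule sum_lists_length_prod[OF assms(2)])
    then show ?thesis
      by (simp add: lsubst_def comp_img_def)
  qed
  finally show "lsubst B g (lsubst A f S) w = lsubst A (comp_img B f g) S w" .
qed

lemma lsubst_cong:
  assumes "\<And>a. a \<in> A \<Longrightarrow> f a = g a"
  shows "lsubst A f S = lsubst A g S"
  unfolding lsubst_def
  by (intro ext sum.cong arg_cong2[where f = "(*)"] prod.cong refl) (auto simp: assms subset_iff)

lemma zeta_nonzero [simp]: "zeta N \<noteq> 0"
  by (simp add: zeta_def)

lemma zeta_powi_eq_1_iff:
  assumes "N > 0"
  shows "zeta N powi k = 1 \<longleftrightarrow> int N dvd k"
proof -
  have "zeta N powi k = 1 \<longleftrightarrow> (\<exists>n. of_int k * (2 * pi / real N) = of_int n * (2 * pi))"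
    by (simp add: zeta_def cis_power_int cis_eq_1_iff)
  also have "\<dots> \<longleftrightarrow> (\<exists>n. k = n * int N)"
  proof -
    have "of_int k * (2 * pi / real N) = of_int n * (2 * pi) \<longleftrightarrow> k = n * int N" for n
    proof -
      have "of_int k * (2 * pi / real N) = of_int n * (2 * pi) \<longleftrightarrow> real_of_int k = real_of_int (n * int N)"
        using assms by (simp add: field_simps)
      then show ?thesis
        by (simp only: of_int_eq_iff)
    qed
    then show ?thesis by simp
  qed
  finally show ?thesis
    by (auto simp: dvd_def mult.commute)
qed

lemma zeta_powi_eq_iff:
  assumes "N > 0"
  shows "zeta N powi a = zeta N powi b \<longleftrightarrow> a mod int N = b mod int N"
proof -
  have "zeta N powi a = zeta N powi b \<longleftrightarrow> zeta N powi (a - b) = 1"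
    by (simp add: power_int_diff)
  then show ?thesis
    using assms by (simp add: zeta_powi_eq_1_iff mod_eq_dvd_iff)
qed

lemma zeta_powi_neg_mult_cong:
  assumes "N > 0" "a mod N = b mod N"
  shows "zeta N powi (- (int k * int a)) = zeta N powi (- (int k * int b))"
proof -
  have "int a mod int N = int b mod int N"
    using assms(2) by (metis of_nat_mod)
  then show ?thesis
    using assms(1) by (intro zeta_powi_eq_iff[THEN iffD2] mod_minus_cong mod_mult_cong) simp_all
qed

lemma zeta_power_eq_1_iff: "N > 0 \<Longrightarrow> zeta N ^ m = 1 \<longleftrightarrow> N dvd m"
  using zeta_powi_eq_1_iff[of N "int m"] by (simp add: power_int_of_nat)

lemma zeta_power_in_mu_iff:
  assumes "N > 0" "d dvd N"
  shows "zeta N ^ m \<in> mu (N div d) \<longleftrightarrow> d dvd m"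
proof -
  obtain M where N: "N = d * M" and "M > 0"
    using assms by (auto elim!: dvdE)
  have "zeta N ^ m \<in> mu (N div d) \<longleftrightarrow> d * M dvd m * M"
    using assms by (simp add: mu_def N power_mult[symmetric] zeta_power_eq_1_iff)
  then show ?thesis
    using \<open>M > 0\<close> by simp
qed

lemma sum_powers_root_of_unity:
  fixes \<omega> :: "'a :: field"
  assumes "\<omega> ^ d = 1"
  shows "(\<Sum>j<d. \<omega> ^ j) = (if \<omega> = 1 then of_nat d else 0)"
  using assms by (simp add: sum_gp_strict)

lemma sum_atLeast1_atMost_quasiperiodic:
  fixes h :: "nat \<Rightarrow> 'a :: comm_semiring_1"
  assumes "\<And>m. h (m + M) = \<omega> * h m"
  shows "(\<Sum>m=1..d * M. h m) = (\<Sum>j<d. \<omega> ^ j) * (\<Sum>k=1..M. h k)"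
proof -
  have shift: "h (j * M + k) = \<omega> ^ j * h k" for j k
  proof (induction j)
    case (Suc j)
    have "h (Suc j * M + k) = h ((j * M + k) + M)"
      by (simp add: algebra_simps)
    then show ?case
      by (simp add: assms Suc.IH mult.assoc)
  qed simp
  have "(\<Sum>m=1..d * M. h m) = (\<Sum>j<d. \<Sum>m\<in>{j * M..<j * M + M}. h (Suc m))"
    by (simp add: sum.atLeast1_atMost_eq sum.nat_group mult.commute[of d])
  also have "\<dots> = (\<Sum>j<d. \<Sum>k<M. \<omega> ^ j * h (Suc k))"
    using shift[of _ "Suc _"]
    by (simp add: sum.shift_bounds_nat_ivl[of _ 0 "_ * M" M, simplified] atLeast0LessThan add.commute)
  finally show ?thesis
    by (simp add: sum_product sum.atLeast1_atMost_eq)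
qed

lemma sum_atLeast1_atMost_multiples:
  fixes g :: "nat \<Rightarrow> 'a :: comm_monoid_add"
  assumes "d > 0"
  shows "(\<Sum>m=1..d * M. if d dvd m then g m else 0) = (\<Sum>k=1..M. g (d * k))"
proof -
  have "(\<Sum>m=1..d * M. if d dvd m then g m else 0) = sum g ({1..d * M} \<inter> {m. d dvd m})"
    by (simp add: sum.inter_restrict)
  also have "{1..d * M} \<inter> {m. d dvd m} = (*) d ` {1..M}"
    using assms by (auto elim!: dvdE)
  also have "sum g ((*) d ` {1..M}) = (\<Sum>k=1..M. g (d * k))"
    using assms by (simp add: sum.reindex inj_on_def)
  finally show ?thesis .
qed

lemma sum_ind_mult:
  assumes "finite A" "b \<in> A"
  shows "(\<Sum>v\<in>A. ind b v * G v) = G b"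
proof -
  have "ind b v * G v = (if v = b then G v else 0)" for v
    by (simp add: ind_def)
  then show ?thesis
    using assms by (simp add: sum.delta)
qed

lemma sum_lincomb_ind_mult:
  assumes "finite A" "finite I" "\<And>m. m \<in> I \<Longrightarrow> b m \<in> A"
  shows "(\<Sum>v\<in>A. (\<Sum>m\<in>I. c m * ind (b m) v) * G v) = (\<Sum>m\<in>I. c m * G (b m))"
proof -
  have "(\<Sum>v\<in>A. (\<Sum>m\<in>I. c m * ind (b m) v) * G v) = (\<Sum>m\<in>I. c m * (\<Sum>v\<in>A. ind (b m) v * G v))"
    by (simp add: sum_distrib_left sum_distrib_right mult.assoc) (rule sum.swap)
  then show ?thesis
    using assms by (simp add: sum_ind_mult)
qed

lemma finite_alphX: "N > 0 \<Longrightarrow> finite (alphX N)"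
  by (simp add: alphX_def mu_def finite_roots_unity)

lemma zeta_power_in_alphX:
  assumes "N > 0"
  shows "XZ (zeta N ^ m) \<in> alphX N"
proof -
  have "zeta N ^ N = 1"
    using assms by (simp add: zeta_power_eq_1_iff)
  then have "(zeta N ^ m) ^ N = 1"
    by (metis power_mult mult.commute power_one)
  then show ?thesis
    unfolding alphX_def mu_def by blast
qed

lemma finite_alphTX: "finite (alphTX N)"
  by (simp add: alphTX_def)

lemma finite_alphTXd: "finite (alphTXd N d)"
  by (simp add: alphTXd_def)

lemma iota_inv_mod: "M > 0 \<Longrightarrow> iota_inv M a mod M = a mod M"
  by (simp add: iota_inv_def)

lemma F_img_TXa:
  assumes "N > 0"
  shows "F_img N (TXa al)
       = (\<lambda>v. \<Sum>m=1..N. zeta N powi (- (int m * int al)) * ind (XZ (zeta N ^ m)) v)"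
  by (simp add: F_img_def zeta_powi_neg_mult_cong[OF assms iota_inv_mod[OF assms]])

lemma Fd_img_TXa:
  assumes "N > 0" "d dvd N"
  shows "Fd_img N d (TXa b)
       = (\<lambda>v. \<Sum>k=1..N div d. zeta N powi (- (int k * int (d * b))) * ind (XZ (zeta N ^ (d * k))) v)"
proof -
  obtain M where N: "N = d * M" and "d > 0" "M > 0"
    using assms by (auto elim!: dvdE)
  have "d * iota_inv M b mod N = d * b mod N"
    using \<open>M > 0\<close> by (simp add: N mult_mod_right[symmetric] iota_inv_mod)
  from zeta_powi_neg_mult_cong[OF assms(1) this]
  show ?thesis
    using \<open>d > 0\<close> by (simp add: Fd_img_def N mult.assoc)
qed

lemma comp_img_F_pd_TXa:
  assumes "N > 0" "d dvd N"
  shows "comp_img (alphX N) (F_img N) (pd_img d) (TXa al) c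
       = (if d dvd al then of_nat d else 0)
         * (\<Sum>k=1..N div d. zeta N powi (- (int k * int al)) * ind (XZ (zeta N ^ (d * k))) c)"
proof -
  obtain M where N: "N = d * M" and "d > 0" "M > 0"
    using assms by (auto elim!: dvdE)
  define h where "h m = zeta N powi (- (int m * int al)) * ind (XZ (zeta N ^ (d * m))) c" for m
  define \<omega> where "\<omega> = zeta N powi (- (int M * int al))"
  have "comp_img (alphX N) (F_img N) (pd_img d) (TXa al) c
      = (\<Sum>m=1..N. zeta N powi (- (int m * int al)) * pd_img d (XZ (zeta N ^ m)) c)"
    unfolding comp_img_def F_img_TXa[OF assms(1)]
    using assms(1) by (intro sum_lincomb_ind_mult) (simp_all add: finite_alphX zeta_power_in_alphX)
  also have "\<dots> = (\<Sum>m=1..d * M. h m)"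
    by (simp add: h_def pd_img_def N power_mult[symmetric] mult.commute)
  also have "\<dots> = (\<Sum>j<d. \<omega> ^ j) * (\<Sum>k=1..M. h k)"
  proof (rule sum_atLeast1_atMost_quasiperiodic)
    fix m
    have "zeta N ^ (d * (m + M)) = zeta N ^ (d * m) * zeta N ^ N"
      by (simp add: N algebra_simps power_add)
    then have root: "zeta N ^ (d * (m + M)) = zeta N ^ (d * m)"
      using assms(1) by (simp add: zeta_power_eq_1_iff)
    have "zeta N powi (- (int (m + M) * int al))
        = zeta N powi (- (int M * int al) + - (int m * int al))"
      by (simp add: algebra_simps)
    also have "\<dots> = \<omega> * zeta N powi (- (int m * int al))"
      unfolding \<omega>_def by (rule power_int_add) simp
    finally show "h (m + M) = \<omega> * h m"
      by (simp add: h_def root)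
  qed
  also have "(\<Sum>j<d. \<omega> ^ j) = (if d dvd al then of_nat d else 0)"
  proof -
    have "\<omega> ^ d = \<omega> powi int d"
      by simp
    also have "\<dots> = zeta N powi (- (int M * int al) * int d)"
      unfolding \<omega>_def by (rule power_int_mult[symmetric])
    also have "\<dots> = zeta N powi (- (int N * int al))"
      by (simp add: N algebra_simps)
    finally have "\<omega> ^ d = 1"
      using assms(1) by (simp add: zeta_powi_eq_1_iff)
    moreover have "\<omega> = 1 \<longleftrightarrow> d dvd al"
    proof -
      have "\<omega> = 1 \<longleftrightarrow> int (d * M) dvd int (M * al)"
        using assms(1) by (simp add: \<omega>_def zeta_powi_eq_1_iff N)
      then show ?thesis
        using \<open>M > 0\<close> by (simp only: of_nat_dvd_iff mult.commute[of d]) simp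
    qed
    ultimately show ?thesis
      by (simp add: sum_powers_root_of_unity)
  qed
  finally show ?thesis
    using \<open>d > 0\<close> by (simp add: h_def N)
qed

lemma comp_img_tpd_Fd_TXa:
  assumes "N > 0" "d dvd N" "al < N"
  shows "comp_img (alphTXd N d) (tpd_img N d) (Fd_img N d) (TXa al) c
       = (if d dvd al then of_nat d else 0)
         * (\<Sum>k=1..N div d. zeta N powi (- (int k * int al)) * ind (XZ (zeta N ^ (d * k))) c)"
proof (cases "d dvd al")
  case True
  then obtain b where al: "al = d * b"
    by blast
  have "d > 0" "b < N div d"
    using assms al by (auto elim!: dvdE)
  then have "TXa b \<in> alphTXd N d"
    by (simp add: alphTXd_def)
  then have "comp_img (alphTXd N d) (tpd_img N d) (Fd_img N d) (TXa al) c = of_nat d * Fd_img N d (TXa b) c"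
    using \<open>d > 0\<close> finite_alphTXd
    by (simp add: comp_img_def tpd_img_def nu_inv_def al mult.assoc sum_distrib_left[symmetric] sum_ind_mult)
  then show ?thesis
    using assms(1,2) True by (simp add: Fd_img_TXa al)
next
  case False
  then show ?thesis
    by (simp add: comp_img_def tpd_img_def)
qed

lemma id_img_zeta_power:
  assumes "N > 0" "d dvd N"
  shows "id_img N d (XZ (zeta N ^ m)) = (if d dvd m then ind (XZ (zeta N ^ m)) else (\<lambda>_. 0))"
  by (simp add: id_img_def zeta_power_in_mu_iff[OF assms])

lemma comp_img_F_id_TXa:
  assumes "N > 0" "d dvd N"
  shows "comp_img (alphX N) (F_img N) (id_img N d) (TXa al) c
       = (\<Sum>k=1..N div d. zeta N powi (- (int k * int (d * al))) * ind (XZ (zeta N ^ (d * k))) c)"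
proof -
  have "d > 0"
    using assms by (auto intro!: gr0I)
  define g where "g m = zeta N powi (- (int m * int al)) * ind (XZ (zeta N ^ m)) c" for m
  have "comp_img (alphX N) (F_img N) (id_img N d) (TXa al) c
      = (\<Sum>m=1..N. zeta N powi (- (int m * int al)) * id_img N d (XZ (zeta N ^ m)) c)"
    unfolding comp_img_def F_img_TXa[OF assms(1)]
    using assms(1) by (intro sum_lincomb_ind_mult) (simp_all add: finite_alphX zeta_power_in_alphX)
  also have "\<dots> = (\<Sum>m=1..N. if d dvd m then g m else 0)"
    by (intro sum.cong refl) (simp add: g_def id_img_zeta_power[OF assms])
  also have "\<dots> = (\<Sum>k=1..N div d. g (d * k))"
    using sum_atLeast1_atMost_multiples[OF \<open>d > 0\<close>, of g "N div d"] assms(2) by simp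
  finally show ?thesis
    by (simp add: g_def algebra_simps)
qed

lemma comp_img_tid_Fd_TXa:
  assumes "N > 0" "d dvd N"
  shows "comp_img (alphTXd N d) (tid_img N d) (Fd_img N d) (TXa al) c
       = (\<Sum>k=1..N div d. zeta N powi (- (int k * int (d * al))) * ind (XZ (zeta N ^ (d * k))) c)"
proof -
  obtain M where N: "N = d * M" and "d > 0" "M > 0"
    using assms by (auto elim!: dvdE)
  then have M: "N div d = M"
    by simp
  have "nu_inv d (d * al mod N) = al mod M"
    using \<open>d > 0\<close> by (simp add: nu_inv_def N)
  moreover have "TXa (al mod M) \<in> alphTXd N d"
    using \<open>M > 0\<close> by (simp add: alphTXd_def M)
  ultimately have "comp_img (alphTXd N d) (tid_img N d) (Fd_img N d) (TXa al) c = Fd_img N d (TXa (al mod M)) c"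
    by (simp add: comp_img_def tid_img_def finite_alphTXd sum_ind_mult)
  also have "\<dots> = (\<Sum>k=1..M. zeta N powi (- (int k * int (d * (al mod M)))) * ind (XZ (zeta N ^ (d * k))) c)"
    unfolding Fd_img_TXa[OF assms] M ..
  also have "\<dots> = (\<Sum>k=1..M. zeta N powi (- (int k * int (d * al))) * ind (XZ (zeta N ^ (d * k))) c)"
  proof -
    have "d * (al mod M) mod N = d * al mod N"
      by (simp add: N)
    from zeta_powi_neg_mult_cong[OF assms(1) this] show ?thesis
      by (simp only:)
  qed
  finally show ?thesis
    by (simp only: M)
qed

lemma comp_img_F_pd_commute:
  assumes "N > 0" "d dvd N" "a \<in> alphTX N"
  shows "comp_img (alphX N) (F_img N) (pd_img d) a = comp_img (alphTXd N d) (tpd_img N d) (Fd_img N d) a"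
proof
  fix c
  show "comp_img (alphX N) (F_img N) (pd_img d) a c = comp_img (alphTXd N d) (tpd_img N d) (Fd_img N d) a c"
  proof (cases a)
    case TX
    have "X0 \<in> alphX N" "TX \<in> alphTXd N d"
      by (simp_all add: alphX_def alphTXd_def)
    with assms(1) show ?thesis
      by (simp add: TX comp_img_def F_img_def pd_img_def tpd_img_def Fd_img_def finite_alphX finite_alphTXd
          mult.assoc sum_distrib_left[symmetric] sum_ind_mult)
  next
    case (TXa al)
    with assms have "al < N"
      by (auto simp: alphTX_def)
    with assms(1,2) show ?thesis
      by (simp add: TXa comp_img_F_pd_TXa comp_img_tpd_Fd_TXa)
  qed
qed

lemma comp_img_F_id_commute:
  assumes "N > 0" "d dvd N"
  shows "comp_img (alphX N) (F_img N) (id_img N d) a = comp_img (alphTXd N d) (tid_img N d) (Fd_img N d) a"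
proof
  fix c
  show "comp_img (alphX N) (F_img N) (id_img N d) a c = comp_img (alphTXd N d) (tid_img N d) (Fd_img N d) a c"
  proof (cases a)
    case TX
    have "X0 \<in> alphX N" "TX \<in> alphTXd N d"
      by (simp_all add: alphX_def alphTXd_def)
    with assms(1) show ?thesis
      by (simp add: TX comp_img_def F_img_def id_img_def tid_img_def Fd_img_def finite_alphX finite_alphTXd
          sum_ind_mult)
  next
    case (TXa al)
    with assms show ?thesis
      by (simp add: comp_img_F_id_TXa comp_img_tid_Fd_TXa)
  qed
qed

theorem lemmaA4:
  fixes N d :: nat and S :: "txletter list \<Rightarrow> complex"
  assumes "N \<ge> 3" and "d > 0" and "d dvd N"
  shows "lsubst (alphX N) (pd_img d) (lsubst (alphTX N) (F_img N) S)
           = lsubst (alphTXd N d) (Fd_img N d) (lsubst (alphTX N) (tpd_img N d) S)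
       \<and> lsubst (alphX N) (id_img N d) (lsubst (alphTX N) (F_img N) S)
           = lsubst (alphTXd N d) (Fd_img N d) (lsubst (alphTX N) (tid_img N d) S)"
proof -
  have "N > 0"
    using assms(1) by simp
  note comp = lsubst_lsubst[OF finite_alphTX finite_alphX[OF \<open>N > 0\<close>]]
    lsubst_lsubst[OF finite_alphTX finite_alphTXd]
  show ?thesis
    unfolding comp using \<open>N > 0\<close> assms(3)
    by (auto intro!: lsubst_cong comp_img_F_pd_commute comp_img_F_id_commute)
qed

end
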